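(* Let $q=p^m$ be a prime power with $p$ prime, let $3\le h\le k$ be integers, and $$D_3=\Bigl\{(x_1,\ldots,x_k)\in\mathbb{F}_q^k\setminus\{0\}:\prod_{i=1}^h x_i\prod_{1\le i<j\le h}(x_i+x_j)=0\Bigr\}.$$ Let $$\Gamma(h,q)=\sum_{s=1}^{\min(h,(q-1)/2)}\frac{(q-1)(q-3)\cdots(q-2s+1)}{s!}\,\mathcal{S}(h,s),$$ where $\mathcal{S}(x,y)$ is the number of surjective functions from a set of size $x$ onto a set of size $y\le x$. Then the length $\#D_3$ of the code $\mathrm{C}_{D_3}$ equals $q^{k-h}\bigl(q^h-(q-1)(q-2)\cdots(q-h)\bigr)-1$ if $p=2$ and $h\le q+1$; $q^k-1$ if $p=2$ and $h>q+1$; and $q^{k-h}\bigl(q^h-\Gamma(h,q)\bigr)-1$ if $p>2$.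
   Context: For a finite set $D=\{P_1,\ldots,P_n\}\subseteq\mathbb{F}_q^k$, $\mathrm{C}_D=\{(f(P_1),\ldots,f(P_n)):f:\mathbb{F}_q^k\to\mathbb{F}_q\text{ linear}\}$, a code of length $n=\#D$. *)

theory Defs
  imports Complex_Main "HOL-Library.FuncSet" "HOL-Library.Cardinality" "HOL-Computational_Algebra.Primes"
begin

text \<open>Vectors of \<open>F_q^k\<close>: functions \<open>nat \<Rightarrow> 'a\<close> with coordinates \<open>x 0, ..., x (k-1)\<close>
  and zero outside \<open>{0..<k}\<close>.\<close>
definition vecs :: "nat \<Rightarrow> (nat \<Rightarrow> 'a::zero) set" where
  "vecs k = {x. \<forall>i. k \<le> i \<longrightarrow> x i = 0}"

text \<open>The defining set \<open>D_3\<close> (coordinates \<open>x_1..x_h\<close> are \<open>x 0 .. x (h-1)\<close>).\<close>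
definition D3 :: "nat \<Rightarrow> nat \<Rightarrow> (nat \<Rightarrow> 'a::field) set" where
  "D3 h k = {x \<in> vecs k. x \<noteq> (\<lambda>_. 0) \<and>
      (\<Prod>i<h. x i) * (\<Prod>i<h. \<Prod>j\<in>{i<..<h}. x i + x j) = 0}"

definition surj_count :: "nat \<Rightarrow> nat \<Rightarrow> nat" where
  "surj_count x y = card {f \<in> {0..<x} \<rightarrow>\<^sub>E {0..<y}. f ` {0..<x} = {0..<y}}"

definition Gamma_hq :: "nat \<Rightarrow> nat \<Rightarrow> rat" where
  "Gamma_hq h q = (\<Sum>s = 1..min h ((q - 1) div 2).
      (\<Prod>j = 1..s. (of_nat q - 2 * of_nat j + 1)) / of_nat (fact s) * of_nat (surj_count h s))"

end

(* A nonzero vector lies outside D3 iff its first h coordinates are nonzero and have pairwise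
   nonzero sums x_i + x_j (i \<noteq> j).  The other k - h coordinates are free, so
   #D3 = q^k - 1 - q^(k-h) N, where N counts such h-tuples.

   In characteristic 2, x_i + x_j = 0 iff x_i = x_j, so N counts the injective h-tuples in F_q^*:
   N = (q-1)(q-2)...(q-h), which vanishes for h \<ge> q.

   In odd characteristic, with q = 2M + 1, a tuple is admissible iff its set of values is a subset
   of F_q^* containing no pair {a, -a}.  There are (M choose s) 2^s such sets of size s (choose s of
   the M pairs, then one element of each), each the value set of S(h,s) tuples; since
   (q-1)(q-3)...(q-2s+1)/s! = 2^s (M choose s), this gives N = Gamma(h,q). *)

theory Submission
  imports Defs "HOL-Number_Theory.Residues"
begin

lemma CHAR_eq_prime_of_card_eq_power:
  assumes "prime p" and "CARD('a::{finite,field}) = p ^ m"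
  shows "CHAR('a) = p"
proof -
  have "prime CHAR('a)"
    by (simp add: finite_imp_CHAR_pos prime_CHAR_semidom)
  moreover have "CHAR('a) dvd p ^ m"
    using CHAR_dvd_CARD[where 'a = 'a] assms(2) by simp
  ultimately show ?thesis
    using assms(1) by (meson prime_dvd_power primes_dvd_imp_eq)
qed

lemma add_eq_0_iff_eq_CHAR_2:
  assumes "CHAR('a::ring_1) = 2"
  shows "x + y = (0::'a) \<longleftrightarrow> x = y"
  using uminus_CHAR_2[OF assms, of x] by (auto simp: add_eq_0_iff)

lemma uminus_neq_self_CHAR_not_2:
  assumes "CHAR('a::idom) \<noteq> 2" and "x \<noteq> (0::'a)"
  shows "- x \<noteq> x"
proof
  assume "- x = x"
  then have "(of_nat 2 :: 'a) = 0"
    using assms(2) by (simp add: add_eq_0_iff2 flip: mult_2)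
  then have "CHAR('a) dvd 2"
    by (simp only: of_nat_eq_0_iff_char_dvd)
  moreover have "CHAR('a) \<noteq> 1"
    by simp
  ultimately show False
    using assms(1) two_is_prime_nat unfolding prime_nat_iff by blast
qed

section \<open>The complement of D3\<close>

lemma card_vecs_prefix:
  fixes P :: "(nat \<Rightarrow> 'a::{finite,zero}) \<Rightarrow> bool"
  assumes "h \<le> k"
  shows "card {x \<in> (vecs k :: (nat \<Rightarrow> 'a) set). P (restrict x {0..<h})} =
         card {f \<in> {0..<h} \<rightarrow>\<^sub>E (UNIV::'a set). P f} * CARD('a) ^ (k - h)"
proof -
  let ?glue = "\<lambda>(f, g) i. if i < h then f i else if i < k then g i else (0::'a)"
  have glue_restrict: "restrict (?glue (f, g)) {0..<h} = f" if "f \<in> {0..<h} \<rightarrow>\<^sub>E UNIV" for f g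
    using that by (auto simp: fun_eq_iff PiE_iff extensional_def)
  have "bij_betw (\<lambda>x. (restrict x {0..<h}, restrict x {h..<k}))
      {x \<in> vecs k. P (restrict x {0..<h})}
      ({f \<in> {0..<h} \<rightarrow>\<^sub>E UNIV. P f} \<times> ({h..<k} \<rightarrow>\<^sub>E UNIV))"
  proof (rule bij_betw_byWitness[where f' = ?glue])
    show "\<forall>x\<in>{x \<in> vecs k. P (restrict x {0..<h})}. ?glue (restrict x {0..<h}, restrict x {h..<k}) = x"
      by (auto simp: vecs_def fun_eq_iff)
    show "\<forall>y\<in>{f \<in> {0..<h} \<rightarrow>\<^sub>E UNIV. P f} \<times> ({h..<k} \<rightarrow>\<^sub>E UNIV).
        (\<lambda>x. (restrict x {0..<h}, restrict x {h..<k})) (?glue y) = y"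
      using assms by (auto simp: fun_eq_iff PiE_def extensional_def)
    show "?glue ` ({f \<in> {0..<h} \<rightarrow>\<^sub>E UNIV. P f} \<times> ({h..<k} \<rightarrow>\<^sub>E UNIV))
        \<subseteq> {x \<in> vecs k. P (restrict x {0..<h})}"
      using glue_restrict assms by (force simp: vecs_def)
  qed auto
  then have "card {x \<in> vecs k. P (restrict x {0..<h})} =
      card ({f \<in> {0..<h} \<rightarrow>\<^sub>E UNIV. P f} \<times> ({h..<k} \<rightarrow>\<^sub>E (UNIV::'a set)))"
    by (rule bij_betw_same_card)
  then show ?thesis
    by (simp add: card_cartesian_product card_funcsetE)
qed

lemma card_vecs: "card (vecs k :: (nat \<Rightarrow> 'a::{finite,zero}) set) = CARD('a) ^ k"
  using card_vecs_prefix[of 0 k "\<lambda>_. True"] by simp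

definition pair_sum_free :: "nat \<Rightarrow> (nat \<Rightarrow> 'a::{zero,plus}) \<Rightarrow> bool" where
  "pair_sum_free h x \<longleftrightarrow> (\<forall>i<h. x i \<noteq> 0) \<and> (\<forall>i<h. \<forall>j<h. i \<noteq> j \<longrightarrow> x i + x j \<noteq> 0)"

lemma prod_pair_sums_neq_0_iff:
  "(\<Prod>i<h. x i) * (\<Prod>i<h. \<Prod>j\<in>{i<..<h}. x i + x j) \<noteq> (0::'a::idom) \<longleftrightarrow> pair_sum_free h x"
proof -
  have "(\<forall>i<h. \<forall>j. i < j \<and> j < h \<longrightarrow> x i + x j \<noteq> 0) \<longleftrightarrow>
      (\<forall>i<h. \<forall>j<h. i \<noteq> j \<longrightarrow> x i + x j \<noteq> 0)"
  proof (intro iffI allI impI)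
    fix i j
    assume ordered: "\<forall>i<h. \<forall>j. i < j \<and> j < h \<longrightarrow> x i + x j \<noteq> 0"
      and "i < h" "j < h" "i \<noteq> j"
    then show "x i + x j \<noteq> 0"
      using ordered[rule_format, of i j] ordered[rule_format, of j i]
      by (cases "i < j") (auto simp: add.commute)
  qed auto
  then show ?thesis
    by (auto simp: pair_sum_free_def prod_zero_iff)
qed

lemma card_D3_complement:
  assumes "0 < h" and "h \<le> k"
  shows "card (D3 h k :: (nat \<Rightarrow> 'a::{finite,field}) set) + 1
      + card {f \<in> {0..<h} \<rightarrow>\<^sub>E (UNIV::'a set). pair_sum_free h f} * CARD('a) ^ (k - h)
    = CARD('a) ^ k"
proof -
  let ?D = "D3 h k :: (nat \<Rightarrow> 'a) set"
  define G where "G = {x \<in> (vecs k :: (nat \<Rightarrow> 'a) set). pair_sum_free h (restrict x {0..<h})}"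
  have pair_sum_free_restrict: "pair_sum_free h (restrict x {0..<h}) \<longleftrightarrow> pair_sum_free h x"
    for x :: "nat \<Rightarrow> 'a"
    by (simp add: pair_sum_free_def)
  have finite_vecs: "finite (vecs k :: (nat \<Rightarrow> 'a) set)"
    by (rule card_ge_0_finite) (simp add: card_vecs)
  have "\<not> pair_sum_free h (\<lambda>_. 0::'a)"
    using assms(1) by (auto simp: pair_sum_free_def)
  then have partition: "vecs k = insert (\<lambda>_. 0) ?D \<union> G"
    and disjoint: "(\<lambda>_. 0) \<notin> ?D" "(\<lambda>_. 0) \<notin> G" "?D \<inter> G = {}"
    by (auto simp: G_def D3_def vecs_def pair_sum_free_restrict simp flip: prod_pair_sums_neq_0_iff)
  have finite_D3: "finite ?D" and "finite G"
    using finite_vecs unfolding partition by auto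
  have "card (vecs k :: (nat \<Rightarrow> 'a) set) = card (insert (\<lambda>_. 0) ?D) + card G"
    unfolding partition by (rule Finite_Set.card_Un_disjoint) (use finite_D3 \<open>finite G\<close> disjoint in auto)
  also have "card (insert (\<lambda>_. 0) ?D) = card ?D + 1"
    using finite_D3 disjoint(1) by simp
  finally have "card (vecs k :: (nat \<Rightarrow> 'a) set) = card ?D + 1 + card G" .
  then show ?thesis
    using card_vecs_prefix[OF assms(2), where 'a = 'a, of "pair_sum_free h"] by (simp add: card_vecs G_def)
qed

lemma of_nat_card_D3:
  assumes "0 < h" and "h \<le> k"
  shows "(of_nat (card (D3 h k :: (nat \<Rightarrow> 'a::{finite,field}) set)) :: 'b::comm_ring_1) =
    of_nat CARD('a) ^ (k - h) *
      (of_nat CARD('a) ^ h - of_nat (card {f \<in> {0..<h} \<rightarrow>\<^sub>E (UNIV::'a set). pair_sum_free h f})) - 1"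
proof -
  let ?N = "card {f \<in> {0..<h} \<rightarrow>\<^sub>E (UNIV::'a set). pair_sum_free h f}"
  have "of_nat (card (D3 h k :: (nat \<Rightarrow> 'a) set)) + 1 + of_nat ?N * of_nat CARD('a) ^ (k - h)
      = (of_nat CARD('a) ^ k :: 'b)"
    using arg_cong[OF card_D3_complement[OF assms, where 'a = 'a], of of_nat] by (simp add: add_ac)
  moreover have "(of_nat CARD('a) ^ k :: 'b) = of_nat CARD('a) ^ (k - h) * of_nat CARD('a) ^ h"
    using assms(2) by (simp flip: power_add)
  ultimately show ?thesis
    by (simp add: right_diff_distrib eq_diff_eq mult.commute add_ac)
qed

section \<open>Characteristic two\<close>

lemma pair_sum_free_CHAR_2_iff:
  assumes "CHAR('a::ring_1) = 2"
  shows "pair_sum_free h (f :: nat \<Rightarrow> 'a) \<longleftrightarrow> (\<forall>i<h. f i \<noteq> 0) \<and> inj_on f {0..<h}"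
  unfolding pair_sum_free_def add_eq_0_iff_eq_CHAR_2[OF assms] inj_on_def by (auto; blast)

lemma prod_of_nat_minus_eq_0:
  assumes "1 \<le> q" and "q \<le> h"
  shows "(\<Prod>i = 1..h. of_nat q - of_nat i :: 'b::comm_ring_1) = 0"
  by (rule prod_zero) (use assms in \<open>auto intro!: bexI[of _ q]\<close>)

lemma of_nat_prod_pred_minus:
  assumes "1 \<le> q"
  shows "of_nat (\<Prod>i<h. q - 1 - i) = (\<Prod>i = 1..h. of_nat q - of_nat i :: 'b::comm_ring_1)"
proof (cases "h < q")
  case True
  then have "of_nat (\<Prod>i<h. q - 1 - i) = (\<Prod>i<h. of_nat q - of_nat (Suc i) :: 'b)"
    by (simp add: of_nat_diff)
  then show ?thesis
    by (simp add: prod.atLeast1_atMost_eq)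
next
  case False
  have "(\<Prod>i<h. q - 1 - i) = 0"
    by (rule prod_zero) (use False assms in \<open>auto intro!: bexI[of _ "q - 1"]\<close>)
  moreover have "(\<Prod>i = 1..h. of_nat q - of_nat i :: 'b) = 0"
    using False assms by (intro prod_of_nat_minus_eq_0) auto
  ultimately show ?thesis
    by (metis of_nat_0)
qed

lemma of_nat_card_pair_sum_free_CHAR_2:
  assumes "CHAR('a::{finite,field}) = 2"
  shows "of_nat (card {f \<in> {0..<h} \<rightarrow>\<^sub>E (UNIV::'a set). pair_sum_free h f}) =
    (\<Prod>i = 1..h. of_nat CARD('a) - of_nat i :: 'b::comm_ring_1)"
proof -
  have "{f \<in> {0..<h} \<rightarrow>\<^sub>E (UNIV::'a set). pair_sum_free h f} =
      {f \<in> {0..<h} \<rightarrow>\<^sub>E UNIV - {0}. inj_on f {0..<h}}"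
    by (auto simp: pair_sum_free_CHAR_2_iff[OF assms] PiE_iff)
  also have "card \<dots> = (\<Prod>i<h. CARD('a) - 1 - i)"
    using card_inj_on_subset_funcset[of "{0..<h}" "UNIV - {0::'a}" "{0..<h}"]
    by (simp add: card_Diff_subset atLeast0LessThan)
  finally show ?thesis
    using of_nat_prod_pred_minus[of "CARD('a)" h] by simp
qed

section \<open>Counting functions by their image\<close>

lemma card_surjections_bij_betw:
  assumes "bij_betw g U V"
  shows "card {f \<in> A \<rightarrow>\<^sub>E U. f ` A = U} = card {f \<in> A \<rightarrow>\<^sub>E V. f ` A = V}"
proof -
  have compose_surjection:
    "(\<lambda>f. restrict (\<phi> \<circ> f) A) ` {f \<in> A \<rightarrow>\<^sub>E X. f ` A = X} \<subseteq> {f \<in> A \<rightarrow>\<^sub>E Y. f ` A = Y}"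
    if "bij_betw \<phi> X Y" for \<phi> X Y
  proof (rule image_subsetI)
    fix f assume "f \<in> {f \<in> A \<rightarrow>\<^sub>E X. f ` A = X}"
    moreover have "\<phi> ` X = Y"
      using that by (simp add: bij_betw_def)
    ultimately show "restrict (\<phi> \<circ> f) A \<in> {f \<in> A \<rightarrow>\<^sub>E Y. f ` A = Y}"
      by (auto simp: image_comp[symmetric])
  qed
  let ?g' = "inv_into U g"
  have "bij_betw (\<lambda>f. restrict (g \<circ> f) A) {f \<in> A \<rightarrow>\<^sub>E U. f ` A = U} {f \<in> A \<rightarrow>\<^sub>E V. f ` A = V}"
  proof (rule bij_betw_byWitness[where f' = "\<lambda>f. restrict (?g' \<circ> f) A"])
    show "\<forall>f\<in>{f \<in> A \<rightarrow>\<^sub>E U. f ` A = U}. restrict (?g' \<circ> restrict (g \<circ> f) A) A = f"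
      using bij_betw_inv_into_left[OF assms] by (auto simp: fun_eq_iff PiE_iff extensional_def)
    show "\<forall>f\<in>{f \<in> A \<rightarrow>\<^sub>E V. f ` A = V}. restrict (g \<circ> restrict (?g' \<circ> f) A) A = f"
      using bij_betw_inv_into_right[OF assms] by (auto simp: fun_eq_iff PiE_iff extensional_def)
  qed (fact compose_surjection[OF assms] compose_surjection[OF bij_betw_inv_into[OF assms]])+
  then show ?thesis
    by (rule bij_betw_same_card)
qed

lemma card_surjections_eq_surj_count:
  assumes "finite U"
  shows "card {f \<in> {0..<h} \<rightarrow>\<^sub>E U. f ` {0..<h} = U} = surj_count h (card U)"
proof -
  obtain g where "bij_betw g U {0..<card U}"
    using ex_bij_betw_finite_nat[OF assms] by blast
  then show ?thesis
    unfolding surj_count_def by (rule card_surjections_bij_betw)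
qed

lemma surj_count_0: "0 < h \<Longrightarrow> surj_count h 0 = 0"
  unfolding surj_count_def by (subst PiE_empty_range[of 0]) auto

lemma surj_count_greater:
  assumes "h < s"
  shows "surj_count h s = 0"
proof -
  have "f ` {0..<h} \<noteq> {0..<s}" for f :: "nat \<Rightarrow> nat"
    using card_image_le[of "{0..<h}" f] assms by fastforce
  then show ?thesis
    unfolding surj_count_def by simp
qed

lemma card_PiE_by_image:
  assumes "finite A" and "finite X"
  shows "card {f \<in> A \<rightarrow>\<^sub>E X. P (f ` A)} = (\<Sum>U | U \<subseteq> X \<and> P U. card {f \<in> A \<rightarrow>\<^sub>E U. f ` A = U})"
proof -
  let ?fibre = "\<lambda>U. {f \<in> A \<rightarrow>\<^sub>E U. f ` A = U}"
  have "{f \<in> A \<rightarrow>\<^sub>E X. P (f ` A)} = (\<Union>U \<in> {U. U \<subseteq> X \<and> P U}. ?fibre U)"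
    by (auto simp: PiE_iff)
  moreover have "finite (?fibre U)" if "U \<subseteq> X" for U
  proof -
    have "finite U"
      using that assms(2) by (rule finite_subset)
    then show ?thesis
      using assms(1) by (simp add: finite_PiE)
  qed
  moreover have "finite {U. U \<subseteq> X \<and> P U}"
    using assms(2) by simp
  ultimately show ?thesis
    by (simp add: card_UN_disjoint disjoint_iff)
qed

lemma card_PiE_by_image_card:
  assumes "finite X"
  shows "card {f \<in> {0..<h} \<rightarrow>\<^sub>E X. P (f ` {0..<h})} =
    (\<Sum>s\<le>card X. card {U. U \<subseteq> X \<and> P U \<and> card U = s} * surj_count h s)"
proof -
  let ?S = "{U. U \<subseteq> X \<and> P U}"
  have "card {f \<in> {0..<h} \<rightarrow>\<^sub>E X. P (f ` {0..<h})} = (\<Sum>U\<in>?S. surj_count h (card U))"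
    unfolding card_PiE_by_image[OF finite_atLeastLessThan assms]
    by (intro sum.cong refl card_surjections_eq_surj_count) (use assms finite_subset in blast)
  also have "\<dots> = (\<Sum>s\<le>card X. \<Sum>U | U \<in> ?S \<and> card U = s. surj_count h (card U))"
    using assms by (intro sum.group[symmetric]) (auto intro: card_mono)
  also have "\<dots> = (\<Sum>s\<le>card X. card {U. U \<subseteq> X \<and> P U \<and> card U = s} * surj_count h s)"
    by (intro sum.cong) auto
  finally show ?thesis .
qed

section \<open>Subsets free of antipodal pairs\<close>

definition free_involution_on :: "('b \<Rightarrow> 'b) \<Rightarrow> 'b set \<Rightarrow> bool" where
  "free_involution_on \<nu> X \<longleftrightarrow> (\<forall>x\<in>X. \<nu> x \<in> X \<and> \<nu> x \<noteq> x \<and> \<nu> (\<nu> x) = x)"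

definition antipodal_free :: "('b \<Rightarrow> 'b) \<Rightarrow> 'b set \<Rightarrow> bool" where
  "antipodal_free \<nu> T \<longleftrightarrow> (\<forall>x\<in>T. \<nu> x \<notin> T)"

definition antipodal_free_subsets :: "('b \<Rightarrow> 'b) \<Rightarrow> 'b set \<Rightarrow> nat \<Rightarrow> 'b set set" where
  "antipodal_free_subsets \<nu> X s = {T. T \<subseteq> X \<and> antipodal_free \<nu> T \<and> card T = s}"

lemma antipodal_free_subsets_0:
  "finite X \<Longrightarrow> antipodal_free_subsets \<nu> X 0 = {{}}"
  by (auto simp: antipodal_free_subsets_def antipodal_free_def finite_subset)

lemma free_involution_on_Diff_orbit:
  assumes "free_involution_on \<nu> X" and "a \<in> X"
  shows "free_involution_on \<nu> (X - {a, \<nu> a})"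
  unfolding free_involution_on_def
proof
  fix x assume x: "x \<in> X - {a, \<nu> a}"
  have "\<nu> x \<in> X" "\<nu> x \<noteq> x" "\<nu> (\<nu> x) = x" "\<nu> (\<nu> a) = a"
    using assms x by (auto simp: free_involution_on_def)
  then have "\<nu> x \<noteq> a" "\<nu> x \<noteq> \<nu> a"
    using x by auto
  with \<open>\<nu> x \<in> X\<close> show "\<nu> x \<in> X - {a, \<nu> a} \<and> \<nu> x \<noteq> x \<and> \<nu> (\<nu> x) = x"
    using \<open>\<nu> x \<noteq> x\<close> \<open>\<nu> (\<nu> x) = x\<close> by simp
qed

lemma antipodal_free_subsets_containing:
  assumes "finite X" and "free_involution_on \<nu> X" and "c \<in> X"
  shows "{T \<in> antipodal_free_subsets \<nu> X (Suc t). c \<in> T} =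
    insert c ` antipodal_free_subsets \<nu> (X - {c, \<nu> c}) t"
proof (intro equalityI subsetI)
  fix T assume "T \<in> {T \<in> antipodal_free_subsets \<nu> X (Suc t). c \<in> T}"
  then have T: "T \<subseteq> X" "antipodal_free \<nu> T" "card T = Suc t" "c \<in> T"
    by (auto simp: antipodal_free_subsets_def)
  then have "\<nu> c \<notin> T"
    by (auto simp: antipodal_free_def)
  then have "T - {c} \<in> antipodal_free_subsets \<nu> (X - {c, \<nu> c}) t"
    using T by (auto simp: antipodal_free_subsets_def antipodal_free_def)
  then show "T \<in> insert c ` antipodal_free_subsets \<nu> (X - {c, \<nu> c}) t"
    using T(4) by (auto intro!: image_eqI[of _ _ "T - {c}"])
next
  fix T assume "T \<in> insert c ` antipodal_free_subsets \<nu> (X - {c, \<nu> c}) t"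
  then obtain U where U: "U \<subseteq> X - {c, \<nu> c}" "antipodal_free \<nu> U" "card U = t" and T: "T = insert c U"
    by (auto simp: antipodal_free_subsets_def)
  have "finite U" and "c \<notin> U"
    using U(1) assms(1) finite_subset by auto
  moreover have "\<nu> x \<notin> insert c U" if "x \<in> insert c U" for x
  proof (cases "x = c")
    case True
    then show ?thesis
      using U(1) assms(2,3) by (auto simp: free_involution_on_def)
  next
    case False
    then have "x \<in> U"
      using that by simp
    then have "x \<in> X" "x \<noteq> \<nu> c"
      using U(1) by auto
    then have "\<nu> x \<noteq> c"
      using assms(2) unfolding free_involution_on_def by force
    then show ?thesis
      using U(2) \<open>x \<in> U\<close> by (auto simp: antipodal_free_def)
  qed
  ultimately show "T \<in> {T \<in> antipodal_free_subsets \<nu> X (Suc t). c \<in> T}"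
    using U T assms(3) \<open>c \<notin> U\<close> by (auto simp: antipodal_free_subsets_def antipodal_free_def)
qed

lemma card_antipodal_free_subsets_Suc:
  assumes "finite X" and "free_involution_on \<nu> X" and "a \<in> X"
  shows "card (antipodal_free_subsets \<nu> X (Suc t)) =
    card (antipodal_free_subsets \<nu> (X - {a, \<nu> a}) (Suc t))
    + 2 * card (antipodal_free_subsets \<nu> (X - {a, \<nu> a}) t)"
proof -
  let ?X' = "X - {a, \<nu> a}" and ?C = "antipodal_free_subsets \<nu>"
  have orbit: "\<nu> a \<in> X" "\<nu> a \<noteq> a" "\<nu> (\<nu> a) = a"
    using assms(2,3) by (auto simp: free_involution_on_def)
  have same_orbit: "X - {\<nu> a, \<nu> (\<nu> a)} = ?X'"
    using orbit by auto
  have card_insert_image: "card (insert c ` ?C ?X' t) = card (?C ?X' t)" if "c \<notin> ?X'" for c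
    using that by (intro card_image inj_onI) (auto simp: antipodal_free_subsets_def insert_ident)
  let ?A = "?C ?X' (Suc t)"
    and ?B = "{T \<in> ?C X (Suc t). a \<in> T}" and ?B' = "{T \<in> ?C X (Suc t). \<nu> a \<in> T}"
  have partition: "?C X (Suc t) = ?A \<union> ?B \<union> ?B'"
    by (auto simp: antipodal_free_subsets_def)
  have finite: "finite (?C Y s)" if "finite Y" for Y s
    by (rule finite_subset[of _ "Pow Y"]) (use that in \<open>auto simp: antipodal_free_subsets_def\<close>)
  have "card (?C X (Suc t)) = card (?A \<union> ?B \<union> ?B')"
    using partition by (rule arg_cong)
  also have "\<dots> = card ?A + card ?B + card ?B'"
  proof -
    have "?A \<inter> ?B = {}" and "(?A \<union> ?B) \<inter> ?B' = {}"
      using orbit(3) by (auto simp: antipodal_free_subsets_def antipodal_free_def)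
    moreover have "finite ?A" "finite ?B" "finite ?B'"
      using assms(1) by (simp_all add: finite)
    ultimately show ?thesis
      by (simp add: Finite_Set.card_Un_disjoint)
  qed
  also have "\<dots> = card (?C ?X' (Suc t)) + 2 * card (?C ?X' t)"
    using antipodal_free_subsets_containing[OF assms]
      antipodal_free_subsets_containing[OF assms(1,2) orbit(1)] same_orbit
    by (simp add: card_insert_image)
  finally show ?thesis .
qed

lemma card_antipodal_free_subsets:
  assumes "finite X" and "free_involution_on \<nu> X" and "card X = 2 * M"
  shows "card (antipodal_free_subsets \<nu> X s) = (M choose s) * 2 ^ s"
  using assms
proof (induction M arbitrary: X s)
  case 0
  then show ?case
    by (cases s) (simp add: antipodal_free_subsets_0, simp add: antipodal_free_subsets_def)
next
  case (Suc M)
  then obtain a where a: "a \<in> X"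
    by fastforce
  have orbit: "\<nu> a \<in> X" "\<nu> a \<noteq> a"
    using Suc.prems(2) a by (auto simp: free_involution_on_def)
  let ?X' = "X - {a, \<nu> a}"
  have IH: "card (antipodal_free_subsets \<nu> ?X' s) = (M choose s) * 2 ^ s" for s
    using Suc.prems a orbit
    by (intro Suc.IH free_involution_on_Diff_orbit) (auto simp: card_Diff_subset)
  show ?case
  proof (cases s)
    case 0
    then show ?thesis
      using Suc.prems(1) by (simp add: antipodal_free_subsets_0)
  next
    case (Suc t)
    then show ?thesis
      using card_antipodal_free_subsets_Suc[OF Suc.prems(1,2) a] IH by (simp add: algebra_simps)
  qed
qed

section \<open>Odd characteristic\<close>

lemma free_involution_on_uminus:
  assumes "CHAR('a::idom) \<noteq> 2"
  shows "free_involution_on uminus (UNIV - {0::'a})"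
  using uminus_neq_self_CHAR_not_2[OF assms] by (auto simp: free_involution_on_def)

lemma pair_sum_free_iff_antipodal_free:
  assumes "CHAR('a::idom) \<noteq> 2"
  shows "pair_sum_free h (f :: nat \<Rightarrow> 'a) \<longleftrightarrow>
    f ` {0..<h} \<subseteq> UNIV - {0} \<and> antipodal_free uminus (f ` {0..<h})"
proof
  assume pair_sum_free: "pair_sum_free h f"
  have "- f i \<noteq> f j" if "i < h" and "j < h" for i j
  proof (cases "i = j")
    case True
    have "f j \<noteq> 0"
      using pair_sum_free that(2) by (simp add: pair_sum_free_def)
    then show ?thesis
      using True uminus_neq_self_CHAR_not_2[OF assms] by blast
  next
    case False
    then have "f i + f j \<noteq> 0"
      using pair_sum_free that by (simp add: pair_sum_free_def)
    then show ?thesis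
      by (simp add: neg_eq_iff_add_eq_0)
  qed
  then show "f ` {0..<h} \<subseteq> UNIV - {0} \<and> antipodal_free uminus (f ` {0..<h})"
    using pair_sum_free by (auto simp: pair_sum_free_def antipodal_free_def)
next
  assume image: "f ` {0..<h} \<subseteq> UNIV - {0} \<and> antipodal_free uminus (f ` {0..<h})"
  have "f i \<noteq> 0" if "i < h" for i
    using image that by (auto simp: image_subset_iff)
  moreover have "f i + f j \<noteq> 0" if "i < h" and "j < h" for i j
  proof
    assume "f i + f j = 0"
    then have "- f i = f j"
      by (simp add: neg_eq_iff_add_eq_0)
    moreover have "- f i \<notin> f ` {0..<h}"
      using image that by (simp add: antipodal_free_def)
    ultimately show False
      using that by auto
  qed
  ultimately show "pair_sum_free h f"
    by (simp add: pair_sum_free_def)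
qed

lemma card_pair_sum_free_odd:
  assumes "CHAR('a::{finite,field}) \<noteq> 2" and "CARD('a) = 2 * M + 1"
  shows "card {f \<in> {0..<h} \<rightarrow>\<^sub>E (UNIV::'a set). pair_sum_free h f} =
    (\<Sum>s\<le>2 * M. (M choose s) * 2 ^ s * surj_count h s)"
proof -
  let ?X = "UNIV - {0::'a}"
  have card_X: "card ?X = 2 * M"
    using assms(2) by (simp add: card_Diff_subset)
  have "{f \<in> {0..<h} \<rightarrow>\<^sub>E (UNIV::'a set). pair_sum_free h f} =
      {f \<in> {0..<h} \<rightarrow>\<^sub>E ?X. antipodal_free uminus (f ` {0..<h})}"
    by (auto simp: pair_sum_free_iff_antipodal_free[OF assms(1)] PiE_iff)
  also have "card \<dots> = (\<Sum>s\<le>card ?X. card {U. U \<subseteq> ?X \<and> antipodal_free uminus U \<and> card U = s}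
      * surj_count h s)"
    by (rule card_PiE_by_image_card) simp
  also have "\<dots> = (\<Sum>s\<le>2 * M. (M choose s) * 2 ^ s * surj_count h s)"
    using card_antipodal_free_subsets[OF _ free_involution_on_uminus[OF assms(1)] card_X]
    by (simp add: card_X antipodal_free_subsets_def)
  finally show ?thesis .
qed

lemma prod_minus_odd_div_fact:
  assumes "q = 2 * M + 1"
  shows "(\<Prod>j = 1..s. of_nat q - 2 * of_nat j + 1 :: 'b::field_char_0) / of_nat (fact s)
    = of_nat ((M choose s) * 2 ^ s)"
proof -
  have "(\<Prod>j = 1..s. of_nat q - 2 * of_nat j + 1 :: 'b) = (\<Prod>i<s. 2 * (of_nat M - of_nat i))"
    using assms by (simp add: prod.atLeast1_atMost_eq algebra_simps)
  also have "\<dots> = 2 ^ s * (\<Prod>i<s. of_nat M - of_nat i)"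
    by (simp only: prod.distrib prod_constant card_lessThan)
  also have "(\<Prod>i<s. of_nat M - of_nat i) = (of_nat M gchoose s) * (fact s :: 'b)"
    by (simp add: gbinomial_mult_fact' atLeast0LessThan)
  finally show ?thesis
    by (simp add: binomial_gbinomial)
qed

lemma Gamma_hq_odd:
  assumes "0 < h" and "q = 2 * M + 1"
  shows "Gamma_hq h q = of_nat (\<Sum>s\<le>2 * M. (M choose s) * 2 ^ s * surj_count h s)"
proof -
  have "Gamma_hq h q = (\<Sum>s = 1..min h M. of_nat ((M choose s) * 2 ^ s * surj_count h s))"
  proof -
    have "(q - 1) div 2 = M"
      using assms(2) by simp
    then show ?thesis
      unfolding Gamma_hq_def
      by (intro sum.cong) (simp_all only: prod_minus_odd_div_fact[OF assms(2)] of_nat_mult)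
  qed
  also have "\<dots> = (\<Sum>s\<le>2 * M. of_nat ((M choose s) * 2 ^ s * surj_count h s))"
  proof (rule sum.mono_neutral_left)
    show "\<forall>s\<in>{..2 * M} - {1..min h M}. of_nat ((M choose s) * 2 ^ s * surj_count h s) = (0::rat)"
    proof
      fix s assume "s \<in> {..2 * M} - {1..min h M}"
      then have "s = 0 \<or> h < s \<or> M < s"
        by auto
      then show "of_nat ((M choose s) * 2 ^ s * surj_count h s) = (0::rat)"
        using surj_count_0[OF assms(1)] surj_count_greater by auto
    qed
  qed auto
  finally show ?thesis
    by simp
qed

theorem proposition4p1:
  fixes p m h k :: nat
    and F :: "'a::{finite,field} itself"
  assumes "prime p" and "m \<ge> 1"
    and "CARD('a) = p ^ m"
    and "3 \<le> h" and "h \<le> k"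
  shows "(of_nat (card (D3 h k :: (nat \<Rightarrow> 'a) set)) :: rat) =
     (let q = CARD('a) in
      if p = 2 \<and> h \<le> q + 1 then
        of_nat q ^ (k - h) * (of_nat q ^ h - (\<Prod>i = 1..h. (of_nat q - of_nat i))) - 1
      else if p = 2 then of_nat q ^ k - 1
      else of_nat q ^ (k - h) * (of_nat q ^ h - Gamma_hq h q) - 1)"
proof -
  let ?q = "CARD('a)"
  let ?N = "card {f \<in> {0..<h} \<rightarrow>\<^sub>E (UNIV::'a set). pair_sum_free h f}"
  have "0 < h"
    using assms(4) by simp
  have char: "CHAR('a) = p"
    using assms(1,3) by (rule CHAR_eq_prime_of_card_eq_power)
  have D3: "(of_nat (card (D3 h k :: (nat \<Rightarrow> 'a) set)) :: rat) =
      of_nat ?q ^ (k - h) * (of_nat ?q ^ h - of_nat ?N) - 1"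
    using \<open>0 < h\<close> assms(5) by (rule of_nat_card_D3)
  show ?thesis
  proof (cases "p = 2")
    case True
    then have N: "(of_nat ?N :: rat) = (\<Prod>i = 1..h. of_nat ?q - of_nat i)"
      using char by (simp add: of_nat_card_pair_sum_free_CHAR_2)
    show ?thesis
    proof (cases "h \<le> ?q + 1")
      case False
      then have "(of_nat ?N :: rat) = 0"
        unfolding N by (intro prod_of_nat_minus_eq_0) (auto simp: Suc_le_eq)
      with D3 False \<open>p = 2\<close> assms(5) show ?thesis
        by (simp flip: power_add)
    qed (use D3 N \<open>p = 2\<close> in \<open>simp add: Let_def\<close>)
  next
    case False
    then have "odd p"
      using prime_ge_2_nat[OF assms(1)] by (intro prime_odd_nat[OF assms(1)]) simp
    then have "odd ?q"
      using assms(3) by simp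
    then obtain M where M: "?q = 2 * M + 1"
      by (rule oddE)
    have "Gamma_hq h ?q = of_nat ?N"
      using char False
      by (simp add: card_pair_sum_free_odd[OF _ M] Gamma_hq_odd[OF \<open>0 < h\<close> M])
    with D3 False show ?thesis
      by (simp add: Let_def)
  qed
qed

end
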